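(* For every $n\ge1$, the minimum number of flippable faces of a locally valid MV assignment of $M_{2,n}$ is $2$. Moreover, for every $n\ge 2$, exactly four locally valid MV assignments of $M_{2,n}$ have exactly $2$ flippable faces, and each of them is colored magenta (i.e., has the same number of flippable faces as its restriction to $M_{2,n-1}$).
   Context: The $2\times n$ Miura-ori $M_{2,n}$ ($n\ge1$) has faces $\alpha_{i,j}$ ($i\in\{1,2\}$, $j\in\{1,\dots,n\}$), interior vertices $x_1,\dots,x_{n-1}$, and creases $e_0$ and $e_{3k-1},e_{3k},e_{3k+1}$ ($k=1,\dots,n-1$). At $x_k$ the creases are left $e_{3k-3}$, top $e_{3k-1}$, right $e_{3k}$, bottom $e_{3k+1}$. Face $\alpha_{1,j}$ is bordered by those of $e_{3j-4}$ (iff $j\ge2$), $e_{3j-3}$, $e_{3j-1}$ (iff $j\le n-1$); $\alpha_{2,j}$ by those of $e_{3j-2}$ (iff $j\ge2$), $e_{3j-3}$, $e_{3j+1}$ (iff $j\le n-1$). An MV assignment $\mu$ maps creases to $\{1,-1\}$ (mountain/valley); it is locally valid if for each $k$ exactly one of $\mu(e_{3k-1}),\mu(e_{3k}),\mu(e_{3k+1})$ differs from $\mu(e_{3k-3})$. The face flip $\mu_\alpha$ negates $\mu$ on the creases bordering $\alpha$; $\alpha$ is flippable under $\mu$ if $\mu,\mu_\alpha$ are both locally valid; $f(\mu)$ is the number of flippable faces (the degree of $\mu$ in the origami flip graph). For $n\ge2$, the restriction of a locally valid assignment $\mu'$ of $M_{2,n}$ to the creases of $M_{2,n-1}$ (all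 creases except $e_{3n-4},e_{3n-3},e_{3n-2}$) is a locally valid assignment $\mu$ of $M_{2,n-1}$; $\mu'$ is colored blue, orange or magenta according as $f(\mu')-f(\mu)$ equals $2$, $1$ or $0$. Both locally valid assignments of $M_{2,1}$ are colored blue. *)

theory Defs
  imports Main
begin

(* Crease e_m is represented by the natural number m.
   Creases of M_{2,n}: e_0 and e_{3k-1}, e_{3k}, e_{3k+1} for k = 1..n-1. *)
definition creases :: "nat \<Rightarrow> nat set" where
  "creases n = {0} \<union> (\<Union>k\<in>{1..n-1}. {3*k-1, 3*k, 3*k+1})"

definition faces :: "nat \<Rightarrow> (nat \<times> nat) set" where
  "faces n = {1,2} \<times> {1..n}"

definition border :: "nat \<Rightarrow> nat \<times> nat \<Rightarrow> nat set" where
  "border n a = (case a of (i, j) \<Rightarrow>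
     if i = 1 then {3*j-3} \<union> (if j \<ge> 2 then {3*j-4} else {}) \<union> (if j \<le> n-1 then {3*j-1} else {})
     else {3*j-3} \<union> (if j \<ge> 2 then {3*j-2} else {}) \<union> (if j \<le> n-1 then {3*j+1} else {}))"

(* An MV assignment of M_{2,n}: values in {1,-1} on the creases; extensionally 0 off the creases
   (so that assignments correspond bijectively to functions creases n -> {1,-1}). *)
definition MV :: "nat \<Rightarrow> (nat \<Rightarrow> int) set" where
  "MV n = {mu. (\<forall>c\<in>creases n. mu c \<in> {1, -1}) \<and> (\<forall>c. c \<notin> creases n \<longrightarrow> mu c = 0)}"

definition valid_at :: "(nat \<Rightarrow> int) \<Rightarrow> nat \<Rightarrow> bool" where
  "valid_at mu k = (card {c \<in> {3*k-1, 3*k, 3*k+1}. mu c \<noteq> mu (3*k-3)} = 1)"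

definition locally_valid :: "nat \<Rightarrow> (nat \<Rightarrow> int) \<Rightarrow> bool" where
  "locally_valid n mu = (mu \<in> MV n \<and> (\<forall>k\<in>{1..n-1}. valid_at mu k))"

definition LV :: "nat \<Rightarrow> (nat \<Rightarrow> int) set" where
  "LV n = {mu. locally_valid n mu}"

definition flip :: "nat \<Rightarrow> (nat \<Rightarrow> int) \<Rightarrow> nat \<times> nat \<Rightarrow> (nat \<Rightarrow> int)" where
  "flip n mu a = (\<lambda>c. if c \<in> border n a then - mu c else mu c)"

definition flippable :: "nat \<Rightarrow> (nat \<Rightarrow> int) \<Rightarrow> nat \<times> nat \<Rightarrow> bool" where
  "flippable n mu a = (locally_valid n mu \<and> locally_valid n (flip n mu a))"

definition nflip :: "nat \<Rightarrow> (nat \<Rightarrow> int) \<Rightarrow> nat" where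
  "nflip n mu = card {a \<in> faces n. flippable n mu a}"

definition restr :: "nat \<Rightarrow> (nat \<Rightarrow> int) \<Rightarrow> (nat \<Rightarrow> int)" where
  "restr n mu = (\<lambda>c. if c \<in> creases (n-1) then mu c else 0)"

(* coloring for n >= 2: blue / orange / magenta according as f(mu') - f(mu) = 2, 1, 0 *)
definition magenta :: "nat \<Rightarrow> (nat \<Rightarrow> int) \<Rightarrow> bool" where
  "magenta n mu = (int (nflip n mu) - int (nflip (n-1) (restr n mu)) = 0)"

end

theory Submission
  imports Defs
begin

(* Take the left crease e_{3k-3} of x_k as reference: local validity says that exactly one of
   the top, right and bottom creases is odd, i.e. differs from it. A face flip negates two
   adjacent creases at each vertex of the face, so alpha_{i,j} is flippable iff the odd crease
   at x_{j-1} is not in the other row and the odd crease at x_j is not in row i. Each end column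
   therefore contains a flippable face, giving f >= 2. If f = 2, no face of the columns 2..n-1
   is flippable, which forces the odd crease to lie in the same row at every vertex; then every
   right crease agrees with its left crease, so mu is fixed by mu(e_0) and that row. These four
   assignments restrict to the analogous ones of M_{2,n-1}, which again have f = 2. *)

definition exactly_one :: "bool \<Rightarrow> bool \<Rightarrow> bool \<Rightarrow> bool" where
  "exactly_one p q r \<longleftrightarrow> (p \<and> \<not> q \<and> \<not> r) \<or> (\<not> p \<and> q \<and> \<not> r) \<or> (\<not> p \<and> \<not> q \<and> r)"

lemma card_filter_triple_eq_1_iff:
  assumes "x \<noteq> y" "x \<noteq> z" "y \<noteq> z"
  shows "card {c \<in> {x, y, z}. P c} = 1 \<longleftrightarrow> exactly_one (P x) (P y) (P z)"
proof -
  have split: "{c \<in> {x, y, z}. P c} =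
      (if P x then {x} else {}) \<union> (if P y then {y} else {}) \<union> (if P z then {z} else {})"
    by auto
  show ?thesis
    unfolding split using assms
    by (cases "P x"; cases "P y"; cases "P z") (simp_all add: exactly_one_def)
qed

(* The crease of row i at x_k separates alpha_{i,k} from alpha_{i,k+1}: it is the top crease
   e_{3k-1} for i = 1 and the bottom crease e_{3k+1} for i = 2; 3 - i is the other row. *)
definition row_crease :: "nat \<Rightarrow> nat \<Rightarrow> nat" where
  "row_crease i k = (if i = 1 then 3 * k - 1 else 3 * k + 1)"

definition odd_in_row :: "(nat \<Rightarrow> int) \<Rightarrow> nat \<Rightarrow> nat \<Rightarrow> bool" where
  "odd_in_row mu i k \<longleftrightarrow> mu (row_crease i k) \<noteq> mu (3 * k - 3)"

lemma valid_at_iff_exactly_one: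
  assumes "1 \<le> k" "i \<in> {1, 2}"
  shows "valid_at mu k \<longleftrightarrow>
    exactly_one (mu (row_crease i k) \<noteq> mu (3 * k - 3)) (mu (3 * k) \<noteq> mu (3 * k - 3))
      (mu (row_crease (3 - i) k) \<noteq> mu (3 * k - 3))"
  using assms unfolding valid_at_def
  by (subst card_filter_triple_eq_1_iff) (auto simp: row_crease_def exactly_one_def)

(* A face right of a vertex negates its row crease x and the right crease r; a face left of it
   negates the left crease a and its row crease x. *)
lemma exactly_one_negate_pair:
  fixes a x r y :: int
  assumes "{a, x, r, y} \<subseteq> {1, -1}" "exactly_one (x \<noteq> a) (r \<noteq> a) (y \<noteq> a)"
  shows "exactly_one (- x \<noteq> a) (- r \<noteq> a) (y \<noteq> a) \<longleftrightarrow> y = a"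
    and "exactly_one (- x \<noteq> - a) (r \<noteq> - a) (y \<noteq> - a) \<longleftrightarrow> x = a"
  using assms by (auto simp: exactly_one_def)

lemma vertex_creases_mem_border_iff:
  assumes "i \<in> {1, 2}" "1 \<le> j" "1 \<le> k"
  shows "3 * k - 3 \<in> border n (i, j) \<longleftrightarrow> k = j"
    and "3 * k \<in> border n (i, j) \<longleftrightarrow> Suc k = j"
    and "row_crease i k \<in> border n (i, j) \<longleftrightarrow> Suc k = j \<or> (k = j \<and> j < n)"
    and "row_crease (3 - i) k \<notin> border n (i, j)"
  using assms by (auto simp: border_def row_crease_def; arith)+

lemma mem_creases_iff:
  "c \<in> creases n \<longleftrightarrow> c = 0 \<or> (\<exists>k \<in> {1..n-1}. c = 3 * k - 1 \<or> c = 3 * k \<or> c = 3 * k + 1)"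
  by (auto simp: creases_def)

lemma mem_creases_iff_row:
  "c \<in> creases n \<longleftrightarrow> c = 0 \<or> (\<exists>k \<in> {1..n-1}. c = 3 * k \<or> (\<exists>i \<in> {1, 2}. c = row_crease i k))"
  unfolding mem_creases_iff row_crease_def by auto

lemma vertex_creases_in_creases:
  assumes "k \<in> {1..n-1}" "i \<in> {1, 2}"
  shows "3 * k - 3 \<in> creases n" "3 * k \<in> creases n" "row_crease i k \<in> creases n"
proof -
  have "k = 1 \<or> (k - 1 \<in> {1..n-1} \<and> 3 * k - 3 = 3 * (k - 1))"
    using assms(1) by auto
  then show "3 * k - 3 \<in> creases n"
    unfolding mem_creases_iff by fastforce
  show "3 * k \<in> creases n" "row_crease i k \<in> creases n"
    using assms unfolding mem_creases_iff row_crease_def by auto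
qed

lemma LV_values:
  assumes "mu \<in> LV n" "c \<in> creases n"
  shows "mu c \<in> {1, -1}"
  using assms by (auto simp: LV_def locally_valid_def MV_def)

lemma LV_at_vertex:
  assumes "mu \<in> LV n" "k \<in> {1..n-1}" "i \<in> {1, 2}"
  shows "{mu (3 * k - 3), mu (row_crease i k), mu (3 * k), mu (row_crease (3 - i) k)} \<subseteq> {1, -1}"
    and "exactly_one (mu (row_crease i k) \<noteq> mu (3 * k - 3)) (mu (3 * k) \<noteq> mu (3 * k - 3))
           (mu (row_crease (3 - i) k) \<noteq> mu (3 * k - 3))"
proof -
  have "3 - i \<in> {1, 2}" using assms(3) by auto
  then show "{mu (3 * k - 3), mu (row_crease i k), mu (3 * k), mu (row_crease (3 - i) k)} \<subseteq> {1, -1}"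
    using LV_values[OF assms(1)] vertex_creases_in_creases[OF assms(2)] assms(3) by auto
  have "valid_at mu k"
    using assms(1,2) by (auto simp: LV_def locally_valid_def)
  then show "exactly_one (mu (row_crease i k) \<noteq> mu (3 * k - 3)) (mu (3 * k) \<noteq> mu (3 * k - 3))
           (mu (row_crease (3 - i) k) \<noteq> mu (3 * k - 3))"
    using valid_at_iff_exactly_one assms(2,3) by auto
qed

lemma valid_at_flip_iff:
  assumes mu: "mu \<in> LV n" and i: "i \<in> {1, 2}" and j: "1 \<le> j" and k: "k \<in> {1..n-1}"
  shows "valid_at (flip n mu (i, j)) k \<longleftrightarrow>
    (Suc k = j \<longrightarrow> \<not> odd_in_row mu (3 - i) k) \<and> (k = j \<longrightarrow> \<not> odd_in_row mu i k)"
proof -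
  have "1 \<le> k" using k by simp
  note border = vertex_creases_mem_border_iff[OF i j this, of n]
  note vertex = LV_at_vertex[OF mu k i]
  let ?mu' = "flip n mu (i, j)"
  have valid': "valid_at ?mu' k \<longleftrightarrow>
    exactly_one (?mu' (row_crease i k) \<noteq> ?mu' (3 * k - 3)) (?mu' (3 * k) \<noteq> ?mu' (3 * k - 3))
      (?mu' (row_crease (3 - i) k) \<noteq> ?mu' (3 * k - 3))"
    using valid_at_iff_exactly_one i k by auto
  have other: "?mu' (row_crease (3 - i) k) = mu (row_crease (3 - i) k)"
    using border(4) by (simp add: flip_def)
  consider "Suc k = j" | "k = j" | "Suc k \<noteq> j" "k \<noteq> j" by blast
  then show ?thesis
  proof cases
    case 1
    then have "?mu' (3 * k - 3) = mu (3 * k - 3)" "?mu' (3 * k) = - mu (3 * k)"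
      "?mu' (row_crease i k) = - mu (row_crease i k)"
      using border by (auto simp: flip_def)
    then show ?thesis
      using 1 valid' other exactly_one_negate_pair(1)[OF vertex] by (simp add: odd_in_row_def)
  next
    case 2
    then have "?mu' (3 * k - 3) = - mu (3 * k - 3)" "?mu' (3 * k) = mu (3 * k)"
      "?mu' (row_crease i k) = - mu (row_crease i k)"
      using border k by (auto simp: flip_def)
    then show ?thesis
      using 2 valid' other exactly_one_negate_pair(2)[OF vertex] by (simp add: odd_in_row_def)
  next
    case 3
    then have "?mu' (3 * k - 3) = mu (3 * k - 3)" "?mu' (3 * k) = mu (3 * k)"
      "?mu' (row_crease i k) = mu (row_crease i k)"
      using border by (auto simp: flip_def)
    then show ?thesis
      using 3 valid' other vertex(2) by simp
  qed
qed

lemma flip_in_MV: "mu \<in> MV n \<Longrightarrow> flip n mu a \<in> MV n"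
  by (auto simp: MV_def flip_def)

lemma flippable_iff:
  assumes mu: "mu \<in> LV n" and i: "i \<in> {1, 2}" and j: "j \<in> {1..n}"
  shows "flippable n mu (i, j) \<longleftrightarrow>
    (1 < j \<longrightarrow> \<not> odd_in_row mu (3 - i) (j - 1)) \<and> (j < n \<longrightarrow> \<not> odd_in_row mu i j)"
proof -
  have "flippable n mu (i, j) \<longleftrightarrow> (\<forall>k \<in> {1..n-1}. valid_at (flip n mu (i, j)) k)"
    using mu flip_in_MV by (auto simp: flippable_def LV_def locally_valid_def)
  also have "\<dots> \<longleftrightarrow> (\<forall>k \<in> {1..n-1}.
      (Suc k = j \<longrightarrow> \<not> odd_in_row mu (3 - i) k) \<and> (k = j \<longrightarrow> \<not> odd_in_row mu i k))"
    using valid_at_flip_iff[OF mu i] j by simp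
  also have "\<dots> \<longleftrightarrow>
      (1 < j \<longrightarrow> \<not> odd_in_row mu (3 - i) (j - 1)) \<and> (j < n \<longrightarrow> \<not> odd_in_row mu i j)"
  proof
    assume "\<forall>k \<in> {1..n-1}.
      (Suc k = j \<longrightarrow> \<not> odd_in_row mu (3 - i) k) \<and> (k = j \<longrightarrow> \<not> odd_in_row mu i k)"
    from this[rule_format, of "j - 1"] this[rule_format, of j]
    show "(1 < j \<longrightarrow> \<not> odd_in_row mu (3 - i) (j - 1)) \<and> (j < n \<longrightarrow> \<not> odd_in_row mu i j)"
      using j by (auto; arith)
  qed (use j in auto)
  finally show ?thesis .
qed

lemma odd_in_row_other:
  assumes "mu \<in> LV n" "k \<in> {1..n-1}" "i \<in> {1, 2}" "odd_in_row mu i k"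
  shows "\<not> odd_in_row mu (3 - i) k" and "mu (3 * k) = mu (3 * k - 3)"
  using LV_at_vertex(2)[OF assms(1-3)] assms(4) by (auto simp: exactly_one_def odd_in_row_def)

lemma flippable_face_in_column:
  assumes mu: "mu \<in> LV n" and j: "j \<in> {1, n}" "1 \<le> n"
  obtains i where "i \<in> {1, 2}" "flippable n mu (i, j)"
proof (cases "n = 1")
  case True
  then show ?thesis
    using that flippable_iff[OF mu, of 1 j] j by auto
next
  case False
  have not_odd: "\<exists>i \<in> {1, 2}. \<not> odd_in_row mu i k" if "k \<in> {1..n-1}" for k
    using odd_in_row_other(1)[OF mu that] by force
  show ?thesis
  proof (cases "j = 1")
    case True
    have "1 \<in> {1..n-1}"
      using \<open>n \<noteq> 1\<close> j by auto
    then obtain i where "i \<in> {1, 2}" "\<not> odd_in_row mu i j"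
      using not_odd True by blast
    then show ?thesis
      using that flippable_iff[OF mu] True j by auto
  next
    case False
    then have "j = n" "n - 1 \<in> {1..n-1}" using j \<open>n \<noteq> 1\<close> by auto
    then obtain i where i: "i \<in> {1, 2}" "\<not> odd_in_row mu i (j - 1)"
      using not_odd by auto
    then have "3 - i \<in> {1, 2}" "3 - (3 - i) = i" by auto
    then show ?thesis
      using that flippable_iff[OF mu] i \<open>j = n\<close> j by fastforce
  qed
qed

lemma finite_faces: "finite (faces n)"
  by (simp add: faces_def)

lemma two_le_nflip:
  assumes "1 \<le> n" "mu \<in> LV n"
  shows "2 \<le> nflip n mu"
proof -
  obtain a b where ab: "a \<noteq> b" "flippable n mu a" "flippable n mu b" "a \<in> faces n" "b \<in> faces n"
  proof (cases "n = 1")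
    case True
    then show ?thesis
      using that[of "(1, 1)" "(2, 1)"] flippable_iff[OF assms(2)] by (auto simp: faces_def)
  next
    case False
    obtain i i' where "i \<in> {1, 2}" "flippable n mu (i, 1)" "i' \<in> {1, 2}" "flippable n mu (i', n)"
      using flippable_face_in_column[OF assms(2)] assms(1) by (metis insertI1 insertI2 singletonI)
    then show ?thesis
      using that[of "(i, 1)" "(i', n)"] False assms(1) by (auto simp: faces_def)
  qed
  then have "card {a, b} \<le> nflip n mu"
    unfolding nflip_def by (intro card_mono) (auto simp: finite_faces)
  then show ?thesis
    using ab(1) by simp
qed

lemma flippable_faces_if_nflip_le_2:
  assumes n: "2 \<le> n" and mu: "mu \<in> LV n" and le: "nflip n mu \<le> 2"
  obtains i0 i1 where "{a \<in> faces n. flippable n mu a} = {(i0, 1), (i1, n)}"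
proof -
  define S where "S = {a \<in> faces n. flippable n mu a}"
  obtain i0 i1 where i01: "i0 \<in> {1, 2}" "flippable n mu (i0, 1)" "i1 \<in> {1, 2}" "flippable n mu (i1, n)"
    using flippable_face_in_column[OF mu] n by (metis insertI1 insertI2 singletonI le_trans one_le_numeral)
  have fin: "finite S"
    by (simp add: S_def finite_faces)
  have ends: "{(i0, 1), (i1, n)} \<subseteq> S"
    using i01 n by (auto simp: S_def faces_def)
  have "card S \<le> card {(i0, 1), (i1, n)}"
    using le n by (simp add: S_def nflip_def)
  then have "S = {(i0, 1), (i1, n)}"
    using card_subset_eq[OF fin ends] card_mono[OF fin ends] by simp
  then show ?thesis
    using that unfolding S_def by blast
qed

lemma odd_in_row_if_nflip_le_2:
  assumes n: "2 \<le> n" and mu: "mu \<in> LV n" and le: "nflip n mu \<le> 2"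
  obtains i where "i \<in> {1, 2}" "\<forall>k \<in> {1..n-1}. odd_in_row mu i k"
proof -
  obtain i0 i1 where S: "{a \<in> faces n. flippable n mu a} = {(i0, 1), (i1, n)}"
    using flippable_faces_if_nflip_le_2[OF assms] .
  have flippable_is_end_face: "(i, j) \<in> {(i0, 1), (i1, n)}"
    if "i \<in> {1, 2}" "j \<in> {1..n}" "flippable n mu (i, j)" for i j
    using that unfolding S[symmetric] by (auto simp: faces_def)
  have start: "\<exists>i \<in> {1, 2}. odd_in_row mu i 1"
  proof (rule ccontr)
    assume "\<not> ?thesis"
    then have "flippable n mu (1, 1)" "flippable n mu (2, 1)"
      using flippable_iff[OF mu] n by auto
    then have "(1, 1) \<in> {(i0, 1), (i1, n)}" "(2, 1) \<in> {(i0, 1), (i1, n)}"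
      using flippable_is_end_face[of _ 1] n by simp_all
    then show False
      using n by auto
  qed
  have propagate: "odd_in_row mu i (Suc k)"
    if "i \<in> {1, 2}" "1 \<le> k" "Suc k < n" "odd_in_row mu i k" for i k
  proof -
    have "\<not> odd_in_row mu (3 - i) k"
      using odd_in_row_other(1) mu that by auto
    moreover have "\<not> flippable n mu (i, Suc k)"
      using flippable_is_end_face[of i "Suc k"] that by auto
    ultimately show ?thesis
      using flippable_iff[OF mu, of i "Suc k"] that by auto
  qed
  from start obtain i where i: "i \<in> {1, 2}" "odd_in_row mu i 1" ..
  have "odd_in_row mu i k" if "k \<in> {1..n-1}" for k
  proof -
    from that have "1 \<le> k" "k \<le> n - 1" by auto
    then show ?thesis
    proof (induction k rule: dec_induct)
      case base
      show ?case using i by simp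
    next
      case (step k)
      then show ?case using propagate[OF i(1)] by simp
    qed
  qed
  then show ?thesis
    using that i by blast
qed

lemma middle_crease_eq_crease_0:
  fixes mu :: "nat \<Rightarrow> int"
  assumes "\<forall>k \<in> {1..n-1}. mu (3 * k) = mu (3 * k - 3)" "m \<le> n - 1"
  shows "mu (3 * m) = mu 0"
  using assms(2)
proof (induction m)
  case (Suc m)
  have "Suc m \<in> {1..n-1}"
    using Suc.prems by simp
  then have "mu (3 * Suc m) = mu (3 * Suc m - 3)"
    using assms(1) by blast
  then have "mu (3 * Suc m) = mu (3 * m)"
    by simp
  with Suc show ?case
    by simp
qed simp

(* 3 dvd c + i holds exactly for the creases of row i. *)
definition striped :: "nat \<Rightarrow> int \<Rightarrow> nat \<Rightarrow> nat \<Rightarrow> int" where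
  "striped n s i c = (if c \<in> creases n then if 3 dvd c + i then - s else s else 0)"

lemma three_dvd_row_crease_plus_iff:
  assumes "1 \<le> k" "i \<in> {1, 2}" "i' \<in> {1, 2}"
  shows "3 dvd row_crease i' k + i \<longleftrightarrow> i' = i"
proof -
  have "row_crease 1 k + 1 = 3 * k" "row_crease 1 k + 2 = 3 * k + 1"
    "row_crease 2 k + 1 = 3 * k + 2" "row_crease 2 k + 2 = 3 * (k + 1)"
    using assms(1) by (simp_all add: row_crease_def)
  then show ?thesis
    using assms(2,3) by auto presburger+
qed

lemma not_three_dvd_multiple_plus:
  fixes m i :: nat
  assumes "i \<in> {1, 2}"
  shows "\<not> 3 dvd 3 * m + i"
  using assms by auto presburger+

lemma striped_at_vertex:
  assumes "k \<in> {1..n-1}" "i \<in> {1, 2}" "i' \<in> {1, 2}"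
  shows "striped n s i (3 * k - 3) = s" "striped n s i (3 * k) = s"
    "striped n s i (row_crease i' k) = (if i' = i then - s else s)"
proof -
  have "3 * k - 3 = 3 * (k - 1)" by simp
  then show "striped n s i (3 * k - 3) = s" "striped n s i (3 * k) = s"
    using vertex_creases_in_creases[OF assms(1,2)] not_three_dvd_multiple_plus[OF assms(2)]
    unfolding striped_def by metis+
  show "striped n s i (row_crease i' k) = (if i' = i then - s else s)"
    using vertex_creases_in_creases(3)[OF assms(1,3)] three_dvd_row_crease_plus_iff[OF _ assms(2,3)] assms(1)
    by (simp add: striped_def)
qed

lemma odd_in_row_striped:
  assumes "k \<in> {1..n-1}" "i \<in> {1, 2}" "i' \<in> {1, 2}" "s \<in> {1, -1}"
  shows "odd_in_row (striped n s i) i' k \<longleftrightarrow> i' = i"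
  using striped_at_vertex[OF assms(1-3)] assms(4) by (auto simp: odd_in_row_def)

lemma striped_in_LV:
  assumes "s \<in> {1, -1}" "i \<in> {1, 2}"
  shows "striped n s i \<in> LV n"
proof -
  have "striped n s i \<in> MV n"
    using assms(1) by (auto simp: MV_def striped_def)
  moreover have "valid_at (striped n s i) k" if "k \<in> {1..n-1}" for k
  proof -
    have "3 - i \<in> {1, 2}" "3 - i \<noteq> i"
      using assms(2) by auto
    then show ?thesis
      using valid_at_iff_exactly_one[of k i] striped_at_vertex[OF that assms(2)] that assms
      by (auto simp: exactly_one_def)
  qed
  ultimately show ?thesis
    by (simp add: LV_def locally_valid_def)
qed

lemma eq_striped_if_odd_in_row:
  assumes mu: "mu \<in> LV n" and i: "i \<in> {1, 2}" and odd: "\<forall>k \<in> {1..n-1}. odd_in_row mu i k"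
  shows "mu = striped n (mu 0) i"
proof
  fix c
  have middle: "mu (3 * m) = mu 0" if "m \<le> n - 1" for m
    using middle_crease_eq_crease_0[OF _ that] odd_in_row_other(2)[OF mu _ i] odd by blast
  have s: "mu 0 \<in> {1, -1}"
    using LV_values[OF mu] by (simp add: creases_def)
  show "mu c = striped n (mu 0) i c"
  proof (cases "c \<in> creases n")
    case False
    then show ?thesis
      using mu by (simp add: striped_def LV_def locally_valid_def MV_def)
  next
    case True
    then consider "c = 0" | k where "k \<in> {1..n-1}" "c = 3 * k"
      | k i' where "k \<in> {1..n-1}" "i' \<in> {1, 2}" "c = row_crease i' k"
      unfolding mem_creases_iff_row by blast
    then show ?thesis
    proof cases
      case 1
      then show ?thesis
        using True not_three_dvd_multiple_plus[OF i, of 0] by (simp add: striped_def)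
    next
      case (2 k)
      then show ?thesis
        using middle striped_at_vertex(2)[OF 2(1) i i] by simp
    next
      case (3 k i')
      have "mu (3 * k - 3) = mu 0"
      proof -
        have "k - 1 \<le> n - 1" "3 * (k - 1) = 3 * k - 3"
          using 3(1) by auto
        then show ?thesis
          using middle by metis
      qed
      moreover have "mu c \<in> {1, -1}"
        using LV_values[OF mu True] .
      moreover have "odd_in_row mu i' k \<longleftrightarrow> i' = i"
        using odd odd_in_row_other(1)[OF mu 3(1) i] 3(1,2) i by auto
      ultimately show ?thesis
        using striped_at_vertex(3)[OF 3(1) i 3(2)] 3(3) s by (auto simp: odd_in_row_def)
    qed
  qed
qed

lemma nflip_striped:
  assumes n: "1 \<le> n" and s: "s \<in> {1, -1}" and i: "i \<in> {1, 2}"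
  shows "nflip n (striped n s i) = 2"
proof -
  have "flippable n (striped n s i) (i', j) \<longleftrightarrow> (1 < j \<longrightarrow> i' = i) \<and> (j < n \<longrightarrow> i' \<noteq> i)"
    if "i' \<in> {1, 2}" "j \<in> {1..n}" for i' j
  proof -
    have "3 - i' \<in> {1, 2}" "3 - i' = i \<longleftrightarrow> i' \<noteq> i"
      using that(1) i by auto
    moreover have "1 < j \<Longrightarrow> j - 1 \<in> {1..n-1}" "j < n \<Longrightarrow> j \<in> {1..n-1}"
      using that(2) by auto
    ultimately show ?thesis
      using flippable_iff[OF striped_in_LV[OF s i] that] odd_in_row_striped[OF _ i _ s] that(1)
      by auto
  qed
  then have "{a \<in> faces n. flippable n (striped n s i) a} = {(3 - i, 1), (i, n)}"
    using n i by (auto simp: faces_def)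
  moreover have "(3 - i, 1) \<noteq> (i, n)"
    using i by auto
  ultimately show ?thesis
    by (simp add: nflip_def)
qed

lemma restr_striped: "restr n (striped n s i) = striped (n - 1) s i"
proof -
  have "creases (n - 1) \<subseteq> creases n"
    unfolding creases_def by (intro Un_mono UN_mono) auto
  then show ?thesis
    unfolding restr_def striped_def by (auto intro!: ext)
qed

lemma inj_on_striped:
  assumes "2 \<le> n"
  shows "inj_on (\<lambda>(s, i). striped n s i) ({1, -1} \<times> {1, 2})"
proof (rule inj_onI, clarify)
  fix s i s' i'
  assume si: "s \<in> {1, -1}" "i \<in> {1, 2}" "s' \<in> {1, -1}" "i' \<in> {1, 2}"
    and eq: "striped n s i = striped n s' i'"
  have "1 \<in> {1..n-1}"
    using assms by simp
  from striped_at_vertex[OF this] eq si have "s = s'" "(if 1 = i then - s else s) = (if 1 = i' then - s' else s')"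
    by (metis insertI1)+
  then show "s = s' \<and> i = i'"
    using si by auto
qed

lemma nflip_eq_2_iff_striped:
  assumes n: "2 \<le> n"
  shows "{mu \<in> LV n. nflip n mu = 2} = (\<lambda>(s, i). striped n s i) ` ({1, -1} \<times> {1, 2})"
proof (intro equalityI subsetI)
  fix mu
  assume "mu \<in> {mu \<in> LV n. nflip n mu = 2}"
  then have mu: "mu \<in> LV n" and "nflip n mu \<le> 2"
    by auto
  then obtain i where "i \<in> {1, 2}" "\<forall>k \<in> {1..n-1}. odd_in_row mu i k"
    using odd_in_row_if_nflip_le_2 n by blast
  moreover have "mu 0 \<in> {1, -1}"
    using LV_values[OF mu] by (simp add: creases_def)
  ultimately show "mu \<in> (\<lambda>(s, i). striped n s i) ` ({1, -1} \<times> {1, 2})"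
    using eq_striped_if_odd_in_row[OF mu] by force
next
  fix mu
  assume "mu \<in> (\<lambda>(s, i). striped n s i) ` ({1, -1} \<times> {1, 2})"
  then show "mu \<in> {mu \<in> LV n. nflip n mu = 2}"
    using striped_in_LV nflip_striped n by auto
qed

theorem lemma4p5:
  shows "(\<forall>n::nat. n \<ge> 1 \<longrightarrow> Min (nflip n ` LV n) = 2)
       \<and> (\<forall>n::nat. n \<ge> 2 \<longrightarrow>
            card {mu \<in> LV n. nflip n mu = 2} = 4 \<and>
            (\<forall>mu \<in> LV n. nflip n mu = 2 \<longrightarrow> magenta n mu))"
proof (intro conjI allI impI ballI)
  fix n :: nat
  assume n: "n \<ge> 1"
  have "nflip n mu \<le> card (faces n)" for mu
    unfolding nflip_def by (rule card_mono) (auto simp: finite_faces)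
  then have "finite (nflip n ` LV n)"
    by (meson atMost_iff finite_atMost finite_subset image_subsetI)
  moreover have "striped n 1 1 \<in> LV n" "nflip n (striped n 1 1) = 2"
    using striped_in_LV nflip_striped n by auto
  ultimately show "Min (nflip n ` LV n) = 2"
    using two_le_nflip[OF n] by (intro Min_eqI) force+
next
  fix n :: nat
  assume n: "n \<ge> 2"
  show "card {mu \<in> LV n. nflip n mu = 2} = 4"
    unfolding nflip_eq_2_iff_striped[OF n] card_image[OF inj_on_striped[OF n]] by simp
  fix mu
  assume mu: "mu \<in> LV n" "nflip n mu = 2"
  have "mu \<in> (\<lambda>(s, i). striped n s i) ` ({1, -1} \<times> {1, 2})"
    using mu unfolding nflip_eq_2_iff_striped[OF n, symmetric] by simp
  then obtain s i where "s \<in> {1, -1}" "i \<in> {1, 2}" "mu = striped n s i"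
    by auto
  moreover have "1 \<le> n - 1"
    using n by simp
  ultimately show "magenta n mu"
    using nflip_striped restr_striped mu(2) by (simp add: magenta_def)
qed

end
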